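(* (i) For any $W \in \mathbb{R}^{m \times n}$ with $m < 2n$, the map $x \mapsto \operatorname{ReLU}(Wx)$ from $\mathbb{R}^n$ to $\mathbb{R}^m$ is not injective. (ii) If $W \in \mathbb{R}^{2n \times n}$ has a directed spanning set of $\mathbb{R}^n$ with respect to every $x \in \mathbb{R}^n$, then, up to a rearrangement of its rows, $W = \begin{bmatrix} B \\ -DB \end{bmatrix}$, where $B \in \mathbb{R}^{n\times n}$ is invertible (its rows form a basis of $\mathbb{R}^n$) and $D \in \mathbb{R}^{n \times n}$ is a diagonal matrix with strictly positive diagonal entries.
   Context: $\operatorname{ReLU}(y)=\max(y,0)$ componentwise. A matrix $W$ with rows $w_i\in\mathbb{R}^n$ has a directed spanning set (DSS) of $\mathbb{R}^n$ with respect to $x \in \mathbb{R}^n$ if the rows $\{w_i : \langle x, w_i\rangle \geq 0\}$ span $\mathbb{R}^n$. *)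

theory Defs
  imports "HOL-Analysis.Analysis"
begin

definition relu :: "real ^ 'm \<Rightarrow> real ^ 'm" where
  "relu y = (\<chi> i. max (y $ i) 0)"

definition has_dss :: "real ^ 'n ^ 'm \<Rightarrow> real ^ 'n \<Rightarrow> bool" where
  "has_dss W x \<longleftrightarrow> span {W $ i | i. x \<bullet> (W $ i) \<ge> 0} = UNIV"

end

theory Submission
  imports Defs
begin

text \<open>If \<open>x \<mapsto> ReLU (W x)\<close> is injective, then \<open>W\<close> has a directed spanning set at every \<open>x\<close>:
  otherwise a nonzero \<open>v\<close> orthogonal to all rows \<open>w\<close> with \<open>\<langle>x, w\<rangle> \<ge> 0\<close> can be added to
  \<open>x\<close> in a small multiple without changing \<open>ReLU (W x)\<close>. For a generic \<open>z\<close>, the rows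
  \<open>w\<close> with \<open>\<langle>z, w\<rangle> > 0\<close> then span, so there are at least \<open>n\<close> of them, and by the
  same argument at \<open>-z\<close> at least \<open>n\<close> rows with \<open>\<langle>z, w\<rangle> < 0\<close>; hence \<open>m \<ge> 2n\<close>.

  With exactly \<open>2n\<close> rows these counts are exact, so the \<open>n\<close> positive rows at a generic
  \<open>z\<close> form a basis. Moving \<open>z\<close> across the hyperplane orthogonal to a row \<open>w\<close> flips
  only the signs of the rows parallel to \<open>w\<close>; as the count stays \<open>n\<close> on both sides,
  some row is a negative multiple of \<open>w\<close>. Pairing every positive row with such a
  negative multiple gives the permutation and the matrices \<open>B\<close> and \<open>D\<close>.\<close>

lemma relu_matrix_vector_mult_nth [simp]: "relu (W *v x) $ i = max (W $ i \<bullet> x) 0"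
  by (simp add: relu_def matrix_vector_mul_component)

lemma ex_not_orthogonal_finite:
  fixes F :: "'a::euclidean_space set"
  assumes "finite F" "0 \<notin> F"
  obtains z where "\<And>v. v \<in> F \<Longrightarrow> z \<bullet> v \<noteq> 0"
proof -
  have "negligible (\<Union>v\<in>F. {z. v \<bullet> z = 0})"
    using assms by (intro negligible_Union) (auto intro!: negligible_hyperplane)
  then have "(\<Union>v\<in>F. {z. v \<bullet> z = 0}) \<noteq> UNIV"
    using non_negligible_UNIV by metis
  then obtain z where "z \<notin> (\<Union>v\<in>F. {z. v \<bullet> z = 0})"
    by blast
  then show thesis
    by (intro that) (auto simp: inner_commute)
qed

lemma ex_orthogonal_not_orthogonal_finite:
  fixes w :: "'a::euclidean_space"
  assumes "finite F"
  obtains x where "x \<bullet> w = 0" "\<And>v. v \<in> F \<Longrightarrow> x \<bullet> v = 0 \<Longrightarrow> v \<in> span {w}"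
proof -
  \<comment> \<open>No \<open>w \<noteq> 0\<close> needed: for \<open>w = 0\<close> the division yields \<open>0\<close> and \<open>proj\<close> is the identity.\<close>
  define proj where "proj v = v - ((v \<bullet> w) / (w \<bullet> w)) *\<^sub>R w" for v
  have "finite (proj ` F - {0})"
    using assms by simp
  then obtain y where y: "\<And>v. v \<in> proj ` F - {0} \<Longrightarrow> y \<bullet> v \<noteq> 0"
    by (rule ex_not_orthogonal_finite) auto
  have proj_adjoint: "proj y \<bullet> v = y \<bullet> proj v" for v
    unfolding proj_def
    by (simp add: inner_diff_left inner_diff_right
        inner_commute[of w v] inner_commute[of w y] inner_commute[of v y])
  have "proj y \<bullet> w = 0"
  proof (cases "w = 0")
    case False
    then show ?thesis
      unfolding proj_def inner_diff_left inner_scaleR_left by simp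
  qed simp
  moreover have "v \<in> span {w}" if "v \<in> F" "proj y \<bullet> v = 0" for v
  proof -
    have "y \<bullet> proj v = 0"
      using that(2) proj_adjoint by simp
    then have "proj v = 0"
      using that(1) y by blast
    then have "v = ((v \<bullet> w) / (w \<bullet> w)) *\<^sub>R w"
      unfolding proj_def by simp
    then show ?thesis
      by (metis span_base span_scale singletonI)
  qed
  ultimately show thesis
    by (rule that)
qed

lemma ex_small_perturbation:
  fixes a b :: "'i::finite \<Rightarrow> real"
  obtains e where "0 < e"
    "\<And>i t. \<bar>t\<bar> \<le> e \<Longrightarrow> sgn (a i + t * b i) = sgn (if a i = 0 then t * b i else a i)"
proof -
  define S where "S = insert 1 ((\<lambda>i. \<bar>a i\<bar> / (\<bar>b i\<bar> + 1)) ` {i. a i \<noteq> 0})"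
  have S: "finite S" "S \<noteq> {}"
    by (auto simp: S_def)
  have "0 < Min S"
    using S by (subst Min_gr_iff) (auto simp: S_def)
  moreover have "sgn (a i + t * b i) = sgn (a i)" if "a i \<noteq> 0" "\<bar>t\<bar> \<le> Min S" for i t
  proof -
    have "\<bar>t\<bar> \<le> \<bar>a i\<bar> / (\<bar>b i\<bar> + 1)"
      using that S Min_le[of S] by (force simp: S_def)
    then have "\<bar>t\<bar> * (\<bar>b i\<bar> + 1) \<le> \<bar>a i\<bar>"
      by (simp add: le_divide_eq add_pos_nonneg)
    then have "\<bar>t * b i\<bar> < \<bar>a i\<bar>"
      using that(1) by (cases "t = 0") (auto simp: abs_mult algebra_simps)
    then show ?thesis
      by (auto simp: sgn_if)
  qed
  ultimately show thesis
    by (intro that[of "Min S"]) simp_all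
qed

lemma inj_relu_imp_has_dss:
  fixes W :: "real^'n^'m"
  assumes inj: "inj (\<lambda>x. relu (W *v x))"
  shows "has_dss W x"
proof (rule ccontr)
  let ?S = "{W $ i | i. x \<bullet> W $ i \<ge> 0}"
  assume "\<not> has_dss W x"
  then have "dim ?S < DIM(real^'n)"
    using dim_eq_full[of ?S] dim_subset_UNIV[of ?S] by (simp add: has_dss_def le_less)
  then obtain v where "v \<noteq> 0" and v: "\<And>y. y \<in> span ?S \<Longrightarrow> orthogonal v y"
    using orthogonal_to_subspace_exists by blast
  have v_rows: "v \<bullet> W $ i = 0" if "x \<bullet> W $ i \<ge> 0" for i
    using v[of "W $ i"] that by (auto simp: orthogonal_def intro: span_base)
  obtain e where "0 < e" and e: "\<And>i t. \<bar>t\<bar> \<le> e \<Longrightarrow>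
      sgn (x \<bullet> W $ i + t * (v \<bullet> W $ i)) =
      sgn (if x \<bullet> W $ i = 0 then t * (v \<bullet> W $ i) else x \<bullet> W $ i)"
    using ex_small_perturbation[of "\<lambda>i. x \<bullet> W $ i" "\<lambda>i. v \<bullet> W $ i"] by blast
  have "max (W $ i \<bullet> (x + e *\<^sub>R v)) 0 = max (W $ i \<bullet> x) 0" for i
  proof (cases "x \<bullet> W $ i \<ge> 0")
    case True
    then show ?thesis
      using v_rows[OF True] by (simp add: inner_add_right inner_commute)
  next
    case False
    then have "x \<bullet> W $ i + e * (v \<bullet> W $ i) < 0"
      using e[of e i] \<open>0 < e\<close> by (simp add: sgn_1_neg)
    then show ?thesis
      using False by (simp add: inner_add_right inner_commute)
  qed
  then have "relu (W *v (x + e *\<^sub>R v)) = relu (W *v x)"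
    by (simp add: vec_eq_iff)
  moreover have "x + e *\<^sub>R v \<noteq> x"
    using \<open>0 < e\<close> \<open>v \<noteq> 0\<close> by simp
  ultimately show False
    using inj by (meson injD)
qed

lemma span_positive_rows:
  fixes V :: "real^'n^'k"
  assumes "has_dss V z" and generic: "\<And>j. V $ j \<noteq> 0 \<Longrightarrow> z \<bullet> V $ j \<noteq> 0"
  shows "span ((\<lambda>j. V $ j) ` {j. 0 < z \<bullet> V $ j}) = UNIV"
proof -
  have "{V $ j | j. z \<bullet> V $ j \<ge> 0} \<subseteq> insert 0 ((\<lambda>j. V $ j) ` {j. 0 < z \<bullet> V $ j})"
  proof
    fix v
    assume "v \<in> {V $ j | j. z \<bullet> V $ j \<ge> 0}"
    then obtain j where "v = V $ j" "z \<bullet> V $ j \<ge> 0"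
      by blast
    then have "v = 0 \<or> j \<in> {j. 0 < z \<bullet> V $ j}"
      using generic[of j] by (metis mem_Collect_eq order_le_less)
    then show "v \<in> insert 0 ((\<lambda>j. V $ j) ` {j. 0 < z \<bullet> V $ j})"
      using \<open>v = V $ j\<close> by blast
  qed
  then have "span {V $ j | j. z \<bullet> V $ j \<ge> 0}
      \<subseteq> span (insert 0 ((\<lambda>j. V $ j) ` {j. 0 < z \<bullet> V $ j}))"
    by (rule span_mono)
  then show ?thesis
    using assms(1) by (auto simp: has_dss_def)
qed

lemma card_positive_rows_ge:
  fixes V :: "real^'n^'k"
  assumes "has_dss V z" "\<And>j. V $ j \<noteq> 0 \<Longrightarrow> z \<bullet> V $ j \<noteq> 0"
  shows "CARD('n) \<le> card ((\<lambda>j. V $ j) ` {j. 0 < z \<bullet> V $ j})"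
proof -
  have "dim (UNIV :: (real^'n) set) \<le> card ((\<lambda>j. V $ j) ` {j. 0 < z \<bullet> V $ j})"
    using span_positive_rows[OF assms] by (intro span_card_ge_dim) auto
  then show ?thesis
    by simp
qed

lemma card_positive_plus_negative:
  fixes f :: "'i::finite \<Rightarrow> real"
  shows "card {i. 0 < f i} + card {i. f i < 0} = card {i. f i \<noteq> 0}"
proof -
  have "card ({i. 0 < f i} \<union> {i. f i < 0}) = card {i. 0 < f i} + card {i. f i < 0}"
    by (rule card_Un_disjoint) auto
  moreover have "{i. 0 < f i} \<union> {i. f i < 0} = {i. f i \<noteq> 0}"
    by auto
  ultimately show ?thesis
    by simp
qed

lemma ex_generic_for_rows:
  fixes V :: "real^'n^'k"
  obtains z where "\<And>j. V $ j \<noteq> 0 \<Longrightarrow> z \<bullet> V $ j \<noteq> 0"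
proof -
  obtain z where "\<And>v. v \<in> range (\<lambda>j. V $ j) - {0} \<Longrightarrow> z \<bullet> v \<noteq> 0"
    using ex_not_orthogonal_finite[of "range (\<lambda>j. V $ j) - {0}"] by auto
  then show thesis
    by (intro that[of z]) simp
qed

lemma card_sign_rows_ge:
  fixes V :: "real^'n^'k"
  assumes dss: "\<And>x. has_dss V x"
    and generic: "\<And>j. V $ j \<noteq> 0 \<Longrightarrow> z \<bullet> V $ j \<noteq> 0"
  shows "CARD('n) \<le> card {j. 0 < z \<bullet> V $ j}" "CARD('n) \<le> card {j. z \<bullet> V $ j < 0}"
proof -
  show "CARD('n) \<le> card {j. 0 < z \<bullet> V $ j}"
    using card_positive_rows_ge[OF dss generic]
      card_image_le[of "{j. 0 < z \<bullet> V $ j}" "\<lambda>j. V $ j"]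
    by simp
  have "CARD('n) \<le> card ((\<lambda>j. V $ j) ` {j. 0 < (- z) \<bullet> V $ j})"
    using generic by (intro card_positive_rows_ge dss) simp
  then show "CARD('n) \<le> card {j. z \<bullet> V $ j < 0}"
    using card_image_le[of "{j. 0 < (- z) \<bullet> V $ j}" "\<lambda>j. V $ j"] by simp
qed

lemma everywhere_dss_imp_card_rows:
  fixes V :: "real^'n^'k"
  assumes "\<And>x. has_dss V x"
  shows "2 * CARD('n) \<le> CARD('k)"
proof -
  obtain z where generic: "\<And>j. V $ j \<noteq> 0 \<Longrightarrow> z \<bullet> V $ j \<noteq> 0"
    using ex_generic_for_rows[of V] by blast
  have "card {j. 0 < z \<bullet> V $ j} + card {j. z \<bullet> V $ j < 0} \<le> CARD('k)"
    unfolding card_positive_plus_negative by (rule card_mono) auto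
  then show ?thesis
    using card_sign_rows_ge[OF assms generic] by linarith
qed

lemma inj_relu_imp_card_rows:
  fixes W :: "real^'n^'m"
  assumes "inj (\<lambda>x. relu (W *v x))"
  shows "2 * CARD('n) \<le> CARD('m)"
  using everywhere_dss_imp_card_rows inj_relu_imp_has_dss[OF assms] by blast

lemma independent_scaleR_eq:
  assumes "independent S" "u \<in> S" "v \<in> S" "a *\<^sub>R u = b *\<^sub>R v" "a \<noteq> 0"
  shows "u = v"
proof (rule ccontr)
  assume "u \<noteq> v"
  then have "b *\<^sub>R v \<in> span (S - {u})"
    using assms(3) by (intro span_scale span_base) simp
  then have "inverse a *\<^sub>R (a *\<^sub>R u) \<in> span (S - {u})"
    unfolding assms(4) by (rule span_scale)
  then have "u \<in> span (S - {u})"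
    using assms(5) by simp
  then show False
    using assms(1,2) unfolding dependent_def by blast
qed

lemma invertible_if_span_rows:
  fixes f :: "'n::finite \<Rightarrow> real^'n"
  assumes "span (range f) = UNIV"
  shows "invertible (\<chi> i. f i)"
proof -
  have "rows (\<chi> i. f i) = range f"
    by (auto simp: rows_def row_def)
  then show ?thesis
    using assms by (simp add: invertible_left_inverse matrix_left_invertible_span_rows)
qed

lemma diagonal_matrix_mult_row:
  fixes A :: "real^'n^'m"
  shows "((\<chi> i j. if i = j then d i else 0) ** A) $ i = d i *\<^sub>R A $ i"
proof -
  have "(\<Sum>l\<in>UNIV. (if i = l then d i else 0) * A $ l $ k) =
      (\<Sum>l\<in>UNIV. if i = l then d i * A $ l $ k else 0)" for k
    by (rule sum.cong) auto
  then show ?thesis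
    by (simp add: vec_eq_iff matrix_matrix_mult_def)
qed

lemma bij_case_sum:
  fixes f :: "'a::finite \<Rightarrow> 'c::finite" and g :: "'b::finite \<Rightarrow> 'c"
  assumes "inj f" "inj g" "range f \<inter> range g = {}" "CARD('c) = CARD('a) + CARD('b)"
  shows "bij (case_sum f g)"
proof -
  have disjoint: "f a \<noteq> g b" for a b
    using assms(3) by blast
  have inj: "inj (case_sum f g)"
  proof (rule injI)
    fix s t
    assume "case_sum f g s = case_sum f g t"
    then show "s = t"
      using assms(1,2) disjoint disjoint[symmetric] by (cases s; cases t) (auto dest: injD)
  qed
  then have "card (range (case_sum f g)) = CARD('c)"
    using assms(4) by (simp add: card_image card_UNIV_sum)
  then have "range (case_sum f g) = UNIV"
    by (intro card_eq_UNIV_imp_eq_UNIV) simp_all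
  with inj show ?thesis
    by (simp add: bij_def)
qed

locale minimal_everywhere_dss =
  fixes V :: "real^'n^'k"
  assumes card_rows: "CARD('k) = 2 * CARD('n)"
    and dss: "\<And>x. has_dss V x"
begin

lemma card_positive_rows:
  assumes generic: "\<And>j. V $ j \<noteq> 0 \<Longrightarrow> z \<bullet> V $ j \<noteq> 0"
  shows "card {j. 0 < z \<bullet> V $ j} = CARD('n)"
    and "card ((\<lambda>j. V $ j) ` {j. 0 < z \<bullet> V $ j}) = CARD('n)"
proof -
  have "card {j. 0 < z \<bullet> V $ j} + card {j. z \<bullet> V $ j < 0} \<le> CARD('k)"
    unfolding card_positive_plus_negative by (rule card_mono) auto
  then show pos: "card {j. 0 < z \<bullet> V $ j} = CARD('n)"
    using card_sign_rows_ge[OF dss generic] card_rows by linarith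
  show "card ((\<lambda>j. V $ j) ` {j. 0 < z \<bullet> V $ j}) = CARD('n)"
    using card_positive_rows_ge[OF dss generic] pos
      card_image_le[of "{j. 0 < z \<bullet> V $ j}" "\<lambda>j. V $ j"]
    by simp
qed

lemma row_nonzero: "V $ j \<noteq> 0"
proof
  assume "V $ j = 0"
  obtain z where generic: "\<And>j. V $ j \<noteq> 0 \<Longrightarrow> z \<bullet> V $ j \<noteq> 0"
    using ex_generic_for_rows[of V] by blast
  have "card {i. z \<bullet> V $ i \<noteq> 0} \<le> card (UNIV - {j})"
    using \<open>V $ j = 0\<close> by (intro card_mono) auto
  also have "\<dots> < CARD('k)"
    by (rule card_Diff1_less) simp_all
  finally show False
    using card_sign_rows_ge[OF dss generic] card_rows
      card_positive_plus_negative[of "\<lambda>i. z \<bullet> V $ i"]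
    by linarith
qed

lemma positive_rows_independent:
  assumes "\<And>j. V $ j \<noteq> 0 \<Longrightarrow> z \<bullet> V $ j \<noteq> 0"
  shows "inj_on (\<lambda>j. V $ j) {j. 0 < z \<bullet> V $ j}"
    and "independent ((\<lambda>j. V $ j) ` {j. 0 < z \<bullet> V $ j})"
proof -
  show "inj_on (\<lambda>j. V $ j) {j. 0 < z \<bullet> V $ j}"
    using card_positive_rows[OF assms] by (intro eq_card_imp_inj_on) auto
  show "independent ((\<lambda>j. V $ j) ` {j. 0 < z \<bullet> V $ j})"
    using card_positive_rows(2)[OF assms] span_positive_rows[OF dss assms]
    by (intro card_le_dim_spanning[of _ UNIV]) auto
qed

lemma ex_negative_multiple_row: "\<exists>j c. c < 0 \<and> V $ j = c *\<^sub>R V $ i"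
proof -
  define w where "w = V $ i"
  have "0 < w \<bullet> w"
    using row_nonzero by (simp add: w_def)
  have "finite (range (\<lambda>j. V $ j))"
    by simp
  then obtain x where "x \<bullet> w = 0"
    and x: "\<And>v. v \<in> range (\<lambda>j. V $ j) \<Longrightarrow> x \<bullet> v = 0 \<Longrightarrow> v \<in> span {w}"
    by (rule ex_orthogonal_not_orthogonal_finite) blast
  have parallel: "\<exists>l. V $ j = l *\<^sub>R w" if "x \<bullet> V $ j = 0" for j
    using x[OF rangeI that] by (auto simp: span_singleton)
  have w_inner_nonzero: "w \<bullet> V $ j \<noteq> 0" if x_j: "x \<bullet> V $ j = 0" for j
  proof -
    obtain l where l: "V $ j = l *\<^sub>R w"
      using parallel[OF x_j] by blast
    then have "l \<noteq> 0"
      using row_nonzero[of j] by auto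
    then show ?thesis
      using l \<open>0 < w \<bullet> w\<close> by simp
  qed
  obtain e where "0 < e" and e: "\<And>j t. \<bar>t\<bar> \<le> e \<Longrightarrow>
      sgn (x \<bullet> V $ j + t * (w \<bullet> V $ j)) =
      sgn (if x \<bullet> V $ j = 0 then t * (w \<bullet> V $ j) else x \<bullet> V $ j)"
    using ex_small_perturbation[of "\<lambda>j. x \<bullet> V $ j" "\<lambda>j. w \<bullet> V $ j"] by blast
  have pos_iff_sgn: "0 < a \<longleftrightarrow> 0 < b" if "sgn a = sgn b" for a b :: real
    using that sgn_greater by metis
  define pos_x where "pos_x = {j. 0 < x \<bullet> V $ j}"
  define pos_parallel where
    "pos_parallel t = {j. x \<bullet> V $ j = 0 \<and> 0 < t * (w \<bullet> V $ j)}" for t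
  have card_shifted: "card (pos_x \<union> pos_parallel t) = CARD('n)" if t_e: "\<bar>t\<bar> = e" for t
  proof -
    define u where "u = x + t *\<^sub>R w"
    have sgn_u: "sgn (u \<bullet> V $ j) =
        sgn (if x \<bullet> V $ j = 0 then t * (w \<bullet> V $ j) else x \<bullet> V $ j)" for j
      using e[of t j] t_e by (simp add: u_def inner_add_left)
    have "sgn (u \<bullet> V $ j) \<noteq> 0" for j
      using w_inner_nonzero[of j] t_e \<open>0 < e\<close> by (auto simp: sgn_u sgn_eq_0_iff)
    then have "card {j. 0 < u \<bullet> V $ j} = CARD('n)"
      by (intro card_positive_rows(1)) (simp add: sgn_eq_0_iff)
    moreover have "{j. 0 < u \<bullet> V $ j} = pos_x \<union> pos_parallel t"
      using pos_iff_sgn[OF sgn_u] by (auto simp: pos_x_def pos_parallel_def)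
    ultimately show ?thesis
      by simp
  qed
  have "card pos_x + card (pos_parallel e) = card pos_x + card (pos_parallel (- e))"
    using card_shifted[of e] card_shifted[of "- e"] \<open>0 < e\<close>
    by (simp add: card_Un_disjoint pos_x_def pos_parallel_def disjoint_iff)
  moreover have "0 < card (pos_parallel e)"
    using \<open>x \<bullet> w = 0\<close> \<open>0 < w \<bullet> w\<close> \<open>0 < e\<close>
    by (auto simp: card_gt_0_iff pos_parallel_def w_def)
  ultimately have "pos_parallel (- e) \<noteq> {}"
    by auto
  then obtain j where "x \<bullet> V $ j = 0" "w \<bullet> V $ j < 0"
    using \<open>0 < e\<close> by (auto simp: pos_parallel_def mult_less_0_iff)
  moreover obtain l where l: "V $ j = l *\<^sub>R w"
    using parallel[OF \<open>x \<bullet> V $ j = 0\<close>] by blast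
  ultimately have "l < 0"
    using \<open>0 < w \<bullet> w\<close> by (simp add: mult_less_0_iff)
  then show ?thesis
    using l unfolding w_def by blast
qed

lemma ex_block_decomposition:
  "\<exists>(p :: 'n + 'n \<Rightarrow> 'k) (B :: real ^ 'n ^ 'n) (D :: real ^ 'n ^ 'n).
     bij p \<and> invertible B
   \<and> (\<forall>i j. i \<noteq> j \<longrightarrow> D $ i $ j = 0) \<and> (\<forall>i. D $ i $ i > 0)
   \<and> (\<forall>i. V $ p (Inl i) = B $ i)
   \<and> (\<forall>i. V $ p (Inr i) = (- (D ** B)) $ i)"
proof -
  obtain q c where c_neg: "\<And>j. c j < 0" and q: "\<And>j. V $ q j = c j *\<^sub>R V $ j"
    using ex_negative_multiple_row by metis
  obtain z where generic: "\<And>j. V $ j \<noteq> 0 \<Longrightarrow> z \<bullet> V $ j \<noteq> 0"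
    using ex_generic_for_rows[of V] by blast
  define E where "E = {j. 0 < z \<bullet> V $ j}"
  obtain e where e: "bij_betw e (UNIV :: 'n set) E"
    using finite_same_card_bij[of "UNIV :: 'n set" E] card_positive_rows(1)[OF generic]
    unfolding E_def by auto
  have q_out: "q j \<notin> E" if "j \<in> E" for j
    using that c_neg[of j] by (simp add: E_def q zero_less_mult_iff)
  have q_inj: "inj_on q E"
  proof (rule inj_onI)
    fix a b
    assume "a \<in> E" "b \<in> E" "q a = q b"
    have "V $ a = V $ b"
    proof (rule independent_scaleR_eq[OF positive_rows_independent(2)[OF generic]])
      show "V $ a \<in> (\<lambda>j. V $ j) ` {j. 0 < z \<bullet> V $ j}"
        and "V $ b \<in> (\<lambda>j. V $ j) ` {j. 0 < z \<bullet> V $ j}"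
        using \<open>a \<in> E\<close> \<open>b \<in> E\<close> by (simp_all add: E_def)
      show "c a *\<^sub>R V $ a = c b *\<^sub>R V $ b"
        by (metis q \<open>q a = q b\<close>)
      show "c a \<noteq> 0"
        using c_neg[of a] by simp
    qed
    then show "a = b"
      using inj_onD[OF positive_rows_independent(1)[OF generic]] \<open>a \<in> E\<close> \<open>b \<in> E\<close>
      unfolding E_def by blast
  qed
  have "inj e" "range e = E"
    using e by (simp_all add: bij_betw_def)
  have "bij (case_sum e (q \<circ> e))"
  proof (rule bij_case_sum)
    show "inj e"
      by fact
    show "inj (q \<circ> e)"
      using comp_inj_on[OF \<open>inj e\<close>] q_inj \<open>range e = E\<close> by simp
    have "range (q \<circ> e) = q ` E"
      using \<open>range e = E\<close> by (metis image_comp)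
    then show "range e \<inter> range (q \<circ> e) = {}"
      unfolding \<open>range e = E\<close> using q_out by auto
    show "CARD('k) = CARD('n) + CARD('n)"
      using card_rows by simp
  qed
  define B :: "real^'n^'n" where "B = (\<chi> a. V $ e a)"
  define d where "d a = - c (e a)" for a
  define D :: "real^'n^'n" where "D = (\<chi> a b. if a = b then d a else 0)"
  have "range (\<lambda>a. V $ e a) = (\<lambda>j. V $ j) ` E"
    unfolding \<open>range e = E\<close>[symmetric] by (simp add: image_image)
  then have "invertible B"
    unfolding B_def using span_positive_rows[OF dss generic]
    by (intro invertible_if_span_rows) (simp add: E_def)
  show ?thesis
  proof (intro exI conjI allI impI)
    show "bij (case_sum e (q \<circ> e))"
      by fact
    show "invertible B"
      by fact
    show "D $ a $ b = 0" if "a \<noteq> b" for a b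
      using that by (simp add: D_def)
    show "0 < D $ a $ a" for a
      using c_neg by (simp add: D_def d_def)
    show "V $ case_sum e (q \<circ> e) (Inl a) = B $ a" for a
      by (simp add: B_def)
    show "V $ case_sum e (q \<circ> e) (Inr a) = (- (D ** B)) $ a" for a
      by (simp add: D_def B_def d_def diagonal_matrix_mult_row q)
  qed
qed

end

theorem corollary1:
  fixes W :: "real ^ 'n ^ 'm" and V :: "real ^ 'n ^ 'k"
  shows "(CARD('m) < 2 * CARD('n) \<longrightarrow> \<not> inj (\<lambda>x. relu (W *v x)))
    \<and> ((CARD('k) = 2 * CARD('n) \<and> (\<forall>x. has_dss V x)) \<longrightarrow>
        (\<exists>(p :: 'n + 'n \<Rightarrow> 'k) (B :: real ^ 'n ^ 'n) (D :: real ^ 'n ^ 'n).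
            bij p \<and> invertible B
          \<and> (\<forall>i j. i \<noteq> j \<longrightarrow> D $ i $ j = 0) \<and> (\<forall>i. D $ i $ i > 0)
          \<and> (\<forall>i. V $ p (Inl i) = B $ i)
          \<and> (\<forall>i. V $ p (Inr i) = (- (D ** B)) $ i)))"
proof (intro conjI impI)
  assume "CARD('m) < 2 * CARD('n)"
  then show "\<not> inj (\<lambda>x. relu (W *v x))"
    using inj_relu_imp_card_rows by fastforce
qed (rule minimal_everywhere_dss.ex_block_decomposition,
    simp add: minimal_everywhere_dss_def)

end
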